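(* Suppose that there exist solutions $\hat f$, $\hat{\hat f}$, $\hat\Upsilon$ to Poisson's equation (with forcing functions $f$, $\hat f$ and $\Upsilon$ respectively, as defined in the context) that are continuously differentiable on $\Pi=\mathbb{R}^d\times\Omega$. Let $\{\Theta_t\}$ be any solution of the fixed-gain QSA ODE $\frac{d}{dt}\Theta_t=\alpha f(\Theta_t,\xi_t)$ and write $\hat f_t=\hat f(\Theta_t,\Phi_t)$, $\Upsilon_t=\Upsilon(\Theta_t,\Phi_t)$. Then: (i) The process $Y_t=\Theta_t+\alpha\hat f_t$ (so $\Theta_t=Y_t-\alpha\hat f_t$) satisfies $$\frac{d}{dt}Y_t=\alpha\Big[\bar f(Y_t)-\alpha\big(B_t\hat f_t+\Upsilon_t\big)\Big],\qquad B_t=\int_0^1\bar A(Y_t-r\alpha\hat f_t)\,dr .$$ (ii) Define $\mathcal W^0_t=-[D^f\hat\Upsilon](\Theta_t,\Phi_t)$, $\mathcal W^1_t=-[D^f\hat{\hat f}](\Theta_t,\Phi_t)+\hat\Upsilon(\Theta_t,\Phi_t)$, $\mathcal W^2_t=\hat{\hat f}(\Theta_t,\Phi_t)$, and suppose $t\mapsto\mathcal W^1_t$ is differentiable and $t\mapsto\mathcal W^2_t$ is twice differentiable. Then $$\frac{d}{dt}\Theta_t=\alpha\big[\bar f(\Theta_t)-\alpha\bar\Upsilon(\Theta_t)+\mathcal W_t\big],\qquad \mathcal W_t=\alpha^2\mathcal W^0_t+\alpha\frac{d}{dt}\mathcal W^1_t+\frac{d^2}{dt^2}\mathcal W^2_t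 .$$
   Context: Setting. Fix $d,m,K\ge1$, frequencies $\omega_i>0$, phases $\phi_i$. Clock process: $\frac{d}{dt}\Phi_t=W\Phi_t$, $W=2\pi j\,\mathrm{diag}(\omega_i)$, $\Phi^i_t=\exp(2\pi j[\omega_it+\phi_i])$; $\Omega\subset\mathbb{C}^K$ is the closure of its orbit (compact, flow invariant; any point may be used as $\Phi_0$), and $\pi$ is the uniform (Haar) probability measure on $\Omega$. Probing signal $\xi_t=G(\Phi_t)$ with $G(z)=G_0((z+1/z)/2)$, $G_0\colon\mathbb{R}^K\to\mathbb{R}^m$ analytic with absolutely summable Taylor coefficients. $f\colon\mathbb{R}^d\times\mathbb{R}^m\to\mathbb{R}^d$ and $\bar f(\theta)=\int_\Omega f(\theta,G(z))\pi(dz)$ are continuously differentiable, $\bar A(\theta)=\partial_\theta\bar f(\theta)$, and $\alpha>0$. Poisson's equation: for $g\colon\mathbb{R}^d\times\Omega\to\mathbb{R}^d$ with $\bar g(\theta)=\int g(\theta,z)\pi(dz)$, a solution is $\hat g\colon\mathbb{R}^d\times\Omega\to\mathbb{R}^d$ such that for every $\theta$, every initial $\Phi_0\in\Omega$ and all $0\le t_0\le t_1$: $\hat g(\theta,\Phi_{t_0})=\int_{t_0}^{t_1}[g(\theta,\Phi_t)-\bar g(\theta)]dt+\hat g(\theta,\Phi_{t_1})$, normalized so $\int\hat g(\theta,z)\pi(dz)=0$. Here $\hat f$ solves it with forcing $(\theta,z)\mapsto f(\theta,G(z))$; $\hat A(\theta,z)=\partial_\theta\hat f(\theta,z)$; $\Upsilon(\theta,z)=-\hat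 A(\theta,z)f(\theta,G(z))$ and $\bar\Upsilon(\theta)=\int_\Omega\Upsilon(\theta,z)\pi(dz)$; $\hat{\hat f}$ solves Poisson's equation with forcing $\hat f$; $\hat\Upsilon$ solves it with forcing $\Upsilon$. For $h\colon\mathbb{R}^d\times\Omega\to\mathbb{R}^d$ differentiable in $\theta$, $[D^fh](\theta,z)=\partial_\theta h(\theta,z)\,f(\theta,G(z))$. *)

theory Defs
  imports "HOL-Probability.Probability"
begin

definition clock :: "real^'k \<Rightarrow> real^'k \<Rightarrow> real \<Rightarrow> complex^'k" where
  "clock \<omega> \<phi> t = (\<chi> i. exp (2 * of_real pi * \<i> * of_real (\<omega>$i * t + \<phi>$i)))"

definition clock_flow :: "real^'k \<Rightarrow> complex^'k \<Rightarrow> real \<Rightarrow> complex^'k" where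
  "clock_flow \<omega> z t = (\<chi> i. z$i * exp (2 * of_real pi * \<i> * of_real (\<omega>$i * t)))"

definition clock_Omega :: "real^'k \<Rightarrow> real^'k \<Rightarrow> (complex^'k) set" where
  "clock_Omega \<omega> \<phi> = closure {clock \<omega> \<phi> t | t. t \<ge> 0}"

text \<open>The compact group H (closure of the one-parameter subgroup); Omega is an H-torsor.\<close>
definition clock_group :: "real^'k \<Rightarrow> (complex^'k) set" where
  "clock_group \<omega> = closure (range (\<lambda>t. \<chi> i. exp (2 * of_real pi * \<i> * of_real (\<omega>$i * t))))"

definition is_haar_on_Omega :: "real^'k \<Rightarrow> real^'k \<Rightarrow> (complex^'k) measure \<Rightarrow> bool" where
  "is_haar_on_Omega \<omega> \<phi> \<mu> \<longleftrightarrow>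
     prob_space \<mu> \<and> sets \<mu> = sets borel \<and> emeasure \<mu> (clock_Omega \<omega> \<phi>) = 1 \<and>
     (\<forall>h \<in> clock_group \<omega>. distr \<mu> borel (\<lambda>z. \<chi> i. h$i * z$i) = \<mu>)"

text \<open>G(z) = G0((z + 1/z)/2); on Omega the argument is real, so we take real parts.\<close>
definition probe :: "(real^'k \<Rightarrow> real^'m) \<Rightarrow> complex^'k \<Rightarrow> real^'m" where
  "probe G0 z = G0 (\<chi> i. Re ((z$i + inverse (z$i)) / 2))"

text \<open>G0 is given on the cube [-1,1]^K by its Taylor series with absolutely summable
  coefficients (multi-indices are functions 'k => nat).\<close>
definition abs_summable_taylor :: "(real^'k \<Rightarrow> real^'m) \<Rightarrow> bool" where
  "abs_summable_taylor G0 \<longleftrightarrow>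
     (\<exists>c :: ('k \<Rightarrow> nat) \<Rightarrow> real^'m.
        (\<lambda>a. norm (c a)) summable_on UNIV \<and>
        (\<forall>x. (\<forall>i. \<bar>x$i\<bar> \<le> 1) \<longrightarrow>
             G0 x = (\<Sum>\<^sub>\<infinity>a. (\<Prod>i\<in>UNIV. (x$i) ^ (a i)) *\<^sub>R c a)))"

text \<open>Continuously differentiable on a (possibly non-open) set S: a derivative
  within S exists at every point of S and depends continuously on the point.\<close>
definition C1_on :: "'a::real_normed_vector set \<Rightarrow> ('a \<Rightarrow> 'b::real_normed_vector) \<Rightarrow> bool" where
  "C1_on S g \<longleftrightarrow> (\<exists>g'. (\<forall>x\<in>S. (g has_derivative blinfun_apply (g' x)) (at x within S))
                         \<and> continuous_on S g')"

definition avg :: "(complex^'k) measure \<Rightarrow> ('a \<Rightarrow> complex^'k \<Rightarrow> real^'d) \<Rightarrow> 'a \<Rightarrow> real^'d" where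
  "avg \<mu> g \<theta> = (LINT z|\<mu>. g \<theta> z)"

definition poisson_solution ::
  "real^'k \<Rightarrow> real^'k \<Rightarrow> (complex^'k) measure \<Rightarrow>
   (real^'d \<Rightarrow> complex^'k \<Rightarrow> real^'d) \<Rightarrow> (real^'d \<Rightarrow> complex^'k \<Rightarrow> real^'d) \<Rightarrow> bool" where
  "poisson_solution \<omega> \<phi> \<mu> g gh \<longleftrightarrow>
     (\<forall>\<theta> z t0 t1. z \<in> clock_Omega \<omega> \<phi> \<longrightarrow> 0 \<le> t0 \<longrightarrow> t0 \<le> t1 \<longrightarrow>
        ((\<lambda>t. g \<theta> (clock_flow \<omega> z t) - avg \<mu> g \<theta>) has_integral
           (gh \<theta> (clock_flow \<omega> z t0) - gh \<theta> (clock_flow \<omega> z t1))) {t0..t1}) \<and>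
     (\<forall>\<theta>. (LINT z|\<mu>. gh \<theta> z) = 0)"

definition dtheta :: "(real^'d \<Rightarrow> complex^'k \<Rightarrow> real^'d) \<Rightarrow> real^'d \<Rightarrow> complex^'k \<Rightarrow> real^'d \<Rightarrow> real^'d" where
  "dtheta h \<theta> z = frechet_derivative (\<lambda>\<theta>'. h \<theta>' z) (at \<theta>)"

definition Df :: "(real^'d \<Rightarrow> real^'m \<Rightarrow> real^'d) \<Rightarrow> (real^'k \<Rightarrow> real^'m) \<Rightarrow>
    (real^'d \<Rightarrow> complex^'k \<Rightarrow> real^'d) \<Rightarrow> real^'d \<Rightarrow> complex^'k \<Rightarrow> real^'d" where
  "Df f G0 h \<theta> z = dtheta h \<theta> z (f \<theta> (probe G0 z))"

definition Upsilon :: "(real^'d \<Rightarrow> real^'m \<Rightarrow> real^'d) \<Rightarrow> (real^'k \<Rightarrow> real^'m) \<Rightarrow>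
    (real^'d \<Rightarrow> complex^'k \<Rightarrow> real^'d) \<Rightarrow> real^'d \<Rightarrow> complex^'k \<Rightarrow> real^'d" where
  "Upsilon f G0 fh \<theta> z = - dtheta fh \<theta> z (f \<theta> (probe G0 z))"

definition Abar_mat :: "(real^'d \<Rightarrow> real^'d) \<Rightarrow> real^'d \<Rightarrow> real^'d^'d" where
  "Abar_mat fb \<theta> = matrix (frechet_derivative fb (at \<theta>))"

end

theory Submission
  imports Defs
begin

(* If gh is a C1 solution of Poisson's equation with forcing g, then along a differentiable path
   theta_t the chain rule splits d/dt gh(theta_t, Phi_t) into the theta-derivative of gh applied
   to theta_t' plus the derivative along the clock, and Poisson's equation (differentiated by the
   fundamental theorem of calculus) identifies the latter as -(g - gbar)(theta_t, Phi_t). Along the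
   QSA ODE this reads d/dt gh = alpha D^f gh - (g - gbar). The fundamental theorem of calculus
   needs the forcing to be continuous along the clock; for f this comes from the uniform
   convergence of the Taylor series of G0 on the cube containing Re Phi_t.
   For gh = fh this gives Y' = alpha (fbar(Theta) - alpha Upsilon), and the integral mean value
   theorem turns fbar(Theta) = fbar(Y - alpha fh) into fbar(Y) - alpha B fh: this is (i).
   For fhh (whose forcing fh has mean zero) and Uph it shows that W2' + alpha W1 = alpha Uph - fh
   along the trajectory; differentiating once more expresses f - fbar through W0, W1' and W2'',
   which is (ii). *)

lemma abs_summable_taylor_continuous_on_cube:
  fixes G0 :: "real^'k \<Rightarrow> real^'m"
  assumes "abs_summable_taylor G0"
  shows "continuous_on {x. \<forall>i. \<bar>x$i\<bar> \<le> 1} G0"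
proof -
  obtain c :: "('k \<Rightarrow> nat) \<Rightarrow> real^'m" where c_summable: "(\<lambda>a. norm (c a)) summable_on UNIV"
    and G0_eq: "\<And>x. (\<forall>i. \<bar>x$i\<bar> \<le> 1) \<Longrightarrow> G0 x = (\<Sum>\<^sub>\<infinity>a. (\<Prod>i\<in>UNIV. (x$i) ^ (a i)) *\<^sub>R c a)"
    using assms unfolding abs_summable_taylor_def by blast
  define cube :: "(real^'k) set" where "cube = {x. \<forall>i. \<bar>x$i\<bar> \<le> 1}"
  define u where "u a x = (\<Prod>i\<in>UNIV. (x$i) ^ (a i)) *\<^sub>R c a" for a and x :: "real^'k"
  have "norm (u a x) \<le> norm (c a)" if "x \<in> cube" for a x
    using that unfolding u_def cube_def
    by (auto simp: abs_prod power_abs intro!: mult_left_le_one_le prod_le_1 prod_nonneg power_le_one)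
  then have uniform: "uniform_limit cube (\<lambda>A x. \<Sum>a\<in>A. u a x) (\<lambda>x. \<Sum>\<^sub>\<infinity>a. u a x)
      (finite_subsets_at_top UNIV)"
    using c_summable by (intro Weierstrass_m_test_general) auto
  have "continuous_on cube (\<lambda>x. \<Sum>\<^sub>\<infinity>a. u a x)"
    by (rule uniform_limit_theorem[OF _ uniform])
      (auto simp: u_def intro!: always_eventually continuous_intros)
  then show ?thesis
    unfolding cube_def by (rule continuous_on_eq) (simp add: G0_eq u_def)
qed

lemma has_vector_derivative_vec_lambda:
  fixes f :: "real \<Rightarrow> 'i::finite \<Rightarrow> 'a::euclidean_space"
  assumes "\<And>i. ((\<lambda>x. f x i) has_vector_derivative f' i) (at t within S)"
  shows "((\<lambda>x. \<chi> i. f x i) has_vector_derivative (\<chi> i. f' i)) (at t within S)"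
  unfolding has_vector_derivative_def
proof (rule has_derivative_componentwise_within[THEN iffD2], intro ballI)
  fix b :: "'a^'i" assume "b \<in> Basis"
  then obtain i u where b: "b = axis i u" "u \<in> Basis" unfolding Basis_vec_def by auto
  have "((\<lambda>x. f x i \<bullet> u) has_derivative (\<lambda>h. (h *\<^sub>R f' i) \<bullet> u)) (at t within S)"
    using assms[of i] unfolding has_vector_derivative_def by (rule has_derivative_inner_left)
  then show "((\<lambda>x. (\<chi> i. f x i) \<bullet> b) has_derivative (\<lambda>h. (h *\<^sub>R (\<chi> i. f' i)) \<bullet> b)) (at t within S)"
    unfolding b by (simp add: inner_axis)
qed

lemma clock_has_vector_derivative:
  "(clock \<omega> \<phi> has_vector_derivative (\<chi> i. (2 * of_real pi * \<i> * of_real (\<omega>$i)) * clock \<omega> \<phi> t $ i))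
     (at t within S)"
  unfolding clock_def vec_lambda_beta
proof (rule has_vector_derivative_vec_lambda)
  fix i
  have "((\<lambda>s. exp (2 * of_real pi * \<i> * (of_real (\<omega>$i) * s + of_real (\<phi>$i)))) has_field_derivative
        (2 * of_real pi * \<i> * of_real (\<omega>$i))
          * exp (2 * of_real pi * \<i> * (of_real (\<omega>$i) * of_real t + of_real (\<phi>$i))))
        (at (of_real t))"
    by (auto intro!: derivative_eq_intros)
  from has_vector_derivative_real_field[OF this]
  show "((\<lambda>s. exp (2 * of_real pi * \<i> * of_real (\<omega>$i * s + \<phi>$i))) has_vector_derivative
         2 * of_real pi * \<i> * of_real (\<omega>$i) * exp (2 * of_real pi * \<i> * of_real (\<omega>$i * t + \<phi>$i)))
         (at t within S)"
    by simp
qed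

lemma continuous_on_clock: "continuous_on S (clock \<omega> \<phi>)"
  unfolding clock_def by (intro continuous_intros)

lemma norm_clock_nth: "norm (clock \<omega> \<phi> t $ i) = 1"
  unfolding clock_def by (simp add: norm_exp_eq_Re)

lemma clock_in_clock_Omega: "t \<ge> 0 \<Longrightarrow> clock \<omega> \<phi> t \<in> clock_Omega \<omega> \<phi>"
  unfolding clock_Omega_def by (rule closure_subset[THEN subsetD]) auto

lemma clock_flow_clock_0: "clock_flow \<omega> (clock \<omega> \<phi> 0) t = clock \<omega> \<phi> t"
  unfolding clock_flow_def clock_def by (simp add: exp_add[symmetric] algebra_simps)

lemma probe_clock:
  "probe G0 (clock \<omega> \<phi> t) = G0 (\<chi> i. Re (clock \<omega> \<phi> t $ i))"
proof -
  have "Re (inverse z) = Re z" if "norm z = 1" for z :: complex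
    using that by (simp add: cmod_def)
  then show ?thesis
    unfolding probe_def by (simp add: norm_clock_nth)
qed

lemma continuous_on_probe_clock:
  assumes "abs_summable_taylor G0"
  shows "continuous_on S (\<lambda>t. probe G0 (clock \<omega> \<phi> t))"
proof -
  have "\<bar>Re (clock \<omega> \<phi> t $ i)\<bar> \<le> 1" for t i
    using abs_Re_le_cmod[of "clock \<omega> \<phi> t $ i"] by (simp add: norm_clock_nth)
  then show ?thesis
    unfolding probe_clock
    by (intro continuous_on_compose2[OF abs_summable_taylor_continuous_on_cube[OF assms]]
        continuous_intros continuous_on_clock) auto
qed

lemma at_within_atLeast_neq_bot:
  assumes "(a::real) \<le> t"
  shows "at t within {a..} \<noteq> bot"
proof
  assume "at t within {a..} = bot"
  moreover have "at_right t \<le> at t within {a..}"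
    using assms by (intro at_le) auto
  ultimately show False
    using trivial_limit_at_right_real by (simp add: bot_unique)
qed

lemma poisson_solution_has_vector_derivative_clock:
  assumes gh: "poisson_solution \<omega> \<phi> \<mu> g gh"
    and g_cont: "continuous_on {0..} (\<lambda>s. g \<theta> (clock \<omega> \<phi> s))"
    and t: "t \<ge> 0"
  shows "((\<lambda>s. gh \<theta> (clock \<omega> \<phi> s)) has_vector_derivative - (g \<theta> (clock \<omega> \<phi> t) - avg \<mu> g \<theta>))
           (at t within {0..})"
proof -
  define F where "F s = g \<theta> (clock \<omega> \<phi> s) - avg \<mu> g \<theta>" for s
  have gh_eq: "gh \<theta> (clock \<omega> \<phi> s) = gh \<theta> (clock \<omega> \<phi> 0) - integral {0..s} F" if "s \<in> {0..}" for s
  proof -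
    have "((\<lambda>r. g \<theta> (clock_flow \<omega> (clock \<omega> \<phi> 0) r) - avg \<mu> g \<theta>) has_integral
        gh \<theta> (clock_flow \<omega> (clock \<omega> \<phi> 0) 0) - gh \<theta> (clock_flow \<omega> (clock \<omega> \<phi> 0) s)) {0..s}"
      using gh clock_in_clock_Omega[of 0 \<omega> \<phi>] that unfolding poisson_solution_def by simp
    then have "(F has_integral gh \<theta> (clock \<omega> \<phi> 0) - gh \<theta> (clock \<omega> \<phi> s)) {0..s}"
      unfolding F_def clock_flow_clock_0 .
    then show ?thesis
      by (simp add: integral_unique)
  qed
  have "continuous_on {0..t+1} F"
    unfolding F_def
    by (intro continuous_on_diff continuous_on_const continuous_on_subset[OF g_cont]) auto
  then have "((\<lambda>s. integral {0..s} F) has_vector_derivative F t) (at t within {0..t+1})"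
    using t by (intro integral_has_vector_derivative) auto
  moreover have "at t within {0..t+1} = at t within {0..}"
    by (rule at_within_nhd[of _ "{..<t+1}"]) auto
  ultimately have "((\<lambda>s. integral {0..s} F) has_vector_derivative F t) (at t within {0..})"
    by simp
  then have "((\<lambda>s. gh \<theta> (clock \<omega> \<phi> 0) - integral {0..s} F) has_vector_derivative - F t)
      (at t within {0..})"
    using has_vector_derivative_diff[OF has_vector_derivative_const] by fastforce
  then show ?thesis
    unfolding F_def[of t, symmetric] using t by (intro has_vector_derivative_transform[OF _ gh_eq]) auto
qed

lemma has_vector_derivative_compose_pair:
  fixes h :: "'a::real_normed_vector \<Rightarrow> 'b::real_normed_vector \<Rightarrow> 'c::real_normed_vector"
  assumes h: "((\<lambda>p. h (fst p) (snd p)) has_derivative D) (at (x t, y t) within UNIV \<times> S)"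
    and x: "(x has_vector_derivative x') (at t within T)"
    and y: "(y has_vector_derivative y') (at t within T)"
    and y_in: "y ` T \<subseteq> S"
  shows "((\<lambda>s. h (x s) (y s)) has_vector_derivative D (x', y')) (at t within T)"
proof -
  have xy: "((\<lambda>s. (x s, y s)) has_derivative (\<lambda>r. (r *\<^sub>R x', r *\<^sub>R y'))) (at t within T)"
    using x y unfolding has_vector_derivative_def by (rule has_derivative_Pair)
  have "((\<lambda>p. h (fst p) (snd p)) has_derivative D) (at (x t, y t) within (\<lambda>s. (x s, y s)) ` T)"
    using y_in by (intro has_derivative_subset[OF h]) auto
  from has_derivative_in_compose[OF xy this]
  have "((\<lambda>s. h (x s) (y s)) has_derivative (\<lambda>r. D (r *\<^sub>R x', r *\<^sub>R y'))) (at t within T)"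
    by simp
  moreover have "D (r *\<^sub>R x', r *\<^sub>R y') = r *\<^sub>R D (x', y')" for r
    using linear_cmul[OF has_derivative_linear[OF h], of r "(x', y')"] by simp
  ultimately show ?thesis
    unfolding has_vector_derivative_def by simp
qed

lemma dtheta_eq_joint_derivative:
  fixes h :: "real^'d \<Rightarrow> complex^'k \<Rightarrow> real^'d"
  assumes h: "((\<lambda>p. h (fst p) (snd p)) has_derivative D) (at (\<theta>, z) within UNIV \<times> S)"
    and z: "z \<in> S"
  shows "dtheta h \<theta> z = (\<lambda>v. D (v, 0))"
proof -
  have "((\<lambda>p. h (fst p) (snd p)) has_derivative D) (at (\<theta>, z) within (\<lambda>\<theta>. (\<theta>, z)) ` UNIV)"
    using z by (intro has_derivative_subset[OF h]) auto
  from has_derivative_in_compose[OF has_derivative_Pair[OF has_derivative_ident has_derivative_const] this]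
  have "((\<lambda>\<theta>. h \<theta> z) has_derivative (\<lambda>v. D (v, 0))) (at \<theta>)"
    by simp
  then show ?thesis
    unfolding dtheta_def by (rule frechet_derivative_at[symmetric])
qed

lemma C1_on_linear_dtheta:
  fixes h :: "real^'d \<Rightarrow> complex^'k \<Rightarrow> real^'d"
  assumes "C1_on (UNIV \<times> S) (\<lambda>p. h (fst p) (snd p))" "z \<in> S"
  shows "linear (dtheta h \<theta> z)"
proof -
  obtain D where D: "((\<lambda>p. h (fst p) (snd p)) has_derivative D) (at (\<theta>, z) within UNIV \<times> S)"
    using assms unfolding C1_on_def by blast
  then have "linear D"
    by (rule has_derivative_linear)
  then show ?thesis
    unfolding dtheta_eq_joint_derivative[OF D \<open>z \<in> S\<close>]
    using linear_compose[OF bounded_linear.linear[OF bounded_linear_Pair[OF bounded_linear_ident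
          bounded_linear_zero]]]
    by (simp add: o_def)
qed

lemma C1_on_continuous_on_dtheta:
  fixes h :: "real^'d \<Rightarrow> complex^'k \<Rightarrow> real^'d"
  assumes h_C1: "C1_on (UNIV \<times> S) (\<lambda>p. h (fst p) (snd p))"
    and cont: "continuous_on T x" "continuous_on T y" "continuous_on T v"
    and y_in: "y ` T \<subseteq> S"
  shows "continuous_on T (\<lambda>s. dtheta h (x s) (y s) (v s))"
proof -
  obtain h' where h': "\<forall>p\<in>UNIV \<times> S.
      ((\<lambda>p. h (fst p) (snd p)) has_derivative blinfun_apply (h' p)) (at p within UNIV \<times> S)"
    and h'_cont: "continuous_on (UNIV \<times> S) h'"
    using h_C1 unfolding C1_on_def by blast
  have "continuous_on T (\<lambda>s. h' (x s, y s) (v s, 0))"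
    using cont y_in
    by (intro blinfun.continuous_on continuous_on_compose2[OF h'_cont] continuous_intros) auto
  then show ?thesis
  proof (rule continuous_on_eq)
    fix s assume "s \<in> T"
    with h' y_in have "dtheta h (x s) (y s) = (\<lambda>w. h' (x s, y s) (w, 0))"
      by (intro dtheta_eq_joint_derivative) auto
    then show "h' (x s, y s) (v s, 0) = dtheta h (x s) (y s) (v s)"
      by simp
  qed
qed

lemma bounded_linear_matrix_vector_mult_left: "bounded_linear (\<lambda>A::real^'n^'m. A *v w)"
  by (simp add: linear_conv_bounded_linear[symmetric] linear_iff matrix_vector_mult_add_rdistrib
      scaleR_matrix_vector_assoc)

lemma integral_mean_value_Abar_mat:
  fixes fb :: "real^'d \<Rightarrow> real^'d"
  assumes "C1_on UNIV fb"
  shows "fb (y - w) = fb y - integral {0..1} (\<lambda>r. Abar_mat fb (y - r *\<^sub>R w)) *v w"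
proof -
  obtain fb' where deriv: "\<And>x. (fb has_derivative blinfun_apply (fb' x)) (at x)"
    and cont: "continuous_on UNIV fb'"
    using assms unfolding C1_on_def by auto
  have Abar: "Abar_mat fb x = matrix (fb' x)" for x
    unfolding Abar_mat_def using frechet_derivative_at[OF deriv] by simp
  have Abar_mult: "Abar_mat fb x *v v = fb' x v" for x v
    unfolding Abar by (metis matrix_vector_mul(3) blinfun.bounded_linear_right)
  have "continuous_on {0..1} (\<lambda>r. Abar_mat fb (y - r *\<^sub>R w))"
    unfolding Abar matrix_def
    by (intro continuous_on_vec_lambda continuous_on_component blinfun.continuous_on
        continuous_on_compose2[OF cont] continuous_intros) auto
  then have "integral {0..1} (\<lambda>r. Abar_mat fb (y - r *\<^sub>R w)) *v w
      = integral {0..1} (\<lambda>r. Abar_mat fb (y - r *\<^sub>R w) *v w)"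
    by (simp add: integral_linear[OF integrable_continuous_interval bounded_linear_matrix_vector_mult_left,
          unfolded o_def])
  also have "\<dots> = - integral {0..1} (\<lambda>r. fb' (y + r *\<^sub>R - w) (- w))"
    by (simp add: Abar_mult blinfun.minus_right)
  also have "\<dots> = - (fb (y - w) - fb y)"
    using mvt_integral[of UNIV fb "\<lambda>x. blinfun_apply (fb' x)" y "- w"] deriv by simp
  finally show ?thesis
    by simp
qed

lemma C1_on_imp_continuous_on: "C1_on S g \<Longrightarrow> continuous_on S g"
  unfolding C1_on_def continuous_on_eq_continuous_within
  by (metis has_derivative_continuous)

lemma poisson_solution_total_derivative:
  fixes g gh :: "real^'d \<Rightarrow> complex^'k \<Rightarrow> real^'d"
  assumes gh_C1: "C1_on (UNIV \<times> clock_Omega \<omega> \<phi>) (\<lambda>p. gh (fst p) (snd p))"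
    and gh: "poisson_solution \<omega> \<phi> \<mu> g gh"
    and g_cont: "continuous_on {0..} (\<lambda>s. g (\<Theta> t) (clock \<omega> \<phi> s))"
    and \<Theta>: "(\<Theta> has_vector_derivative \<Theta>') (at t within {0..})"
    and t: "t \<ge> 0"
  shows "((\<lambda>s. gh (\<Theta> s) (clock \<omega> \<phi> s)) has_vector_derivative
           dtheta gh (\<Theta> t) (clock \<omega> \<phi> t) \<Theta>' - (g (\<Theta> t) (clock \<omega> \<phi> t) - avg \<mu> g (\<Theta> t)))
           (at t within {0..})"
proof -
  have z: "clock \<omega> \<phi> t \<in> clock_Omega \<omega> \<phi>"
    using t by (rule clock_in_clock_Omega)
  obtain D where D: "((\<lambda>p. gh (fst p) (snd p)) has_derivative D)
      (at (\<Theta> t, clock \<omega> \<phi> t) within UNIV \<times> clock_Omega \<omega> \<phi>)"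
    using gh_C1 z unfolding C1_on_def by blast
  obtain \<Phi>' where \<Phi>': "(clock \<omega> \<phi> has_vector_derivative \<Phi>') (at t within {0..})"
    using clock_has_vector_derivative by blast
  have clock_image: "clock \<omega> \<phi> ` {0..} \<subseteq> clock_Omega \<omega> \<phi>"
    using clock_in_clock_Omega by auto
  have "((\<lambda>s. gh (\<Theta> t) (clock \<omega> \<phi> s)) has_vector_derivative D (0, \<Phi>')) (at t within {0..})"
    using has_vector_derivative_compose_pair[where x="\<lambda>_. \<Theta> t", OF D _ \<Phi>' clock_image] by simp
  then have clock_part: "D (0, \<Phi>') = - (g (\<Theta> t) (clock \<omega> \<phi> t) - avg \<mu> g (\<Theta> t))"
    using poisson_solution_has_vector_derivative_clock[OF gh g_cont t]
    by (rule vector_derivative_unique_within[OF at_within_atLeast_neq_bot[OF t]])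
  have "D (\<Theta>', \<Phi>') = D (\<Theta>', 0) + D (0, \<Phi>')"
    using linear_add[OF has_derivative_linear[OF D], of "(\<Theta>', 0)" "(0, \<Phi>')"] by simp
  then have "D (\<Theta>', \<Phi>') = dtheta gh (\<Theta> t) (clock \<omega> \<phi> t) \<Theta>' - (g (\<Theta> t) (clock \<omega> \<phi> t) - avg \<mu> g (\<Theta> t))"
    by (simp add: clock_part dtheta_eq_joint_derivative[OF D z])
  with has_vector_derivative_compose_pair[OF D \<Theta> \<Phi>' clock_image] show ?thesis
    by simp
qed

locale qsa_poisson =
  fixes \<omega> \<phi> :: "real^'k"
    and G0 :: "real^'k \<Rightarrow> real^'m"
    and f :: "real^'d \<Rightarrow> real^'m \<Rightarrow> real^'d"
    and \<mu> :: "(complex^'k) measure"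
    and \<alpha> :: real
    and fh :: "real^'d \<Rightarrow> complex^'k \<Rightarrow> real^'d"
    and \<Theta> :: "real \<Rightarrow> real^'d"
  assumes G0: "abs_summable_taylor G0"
    and f_C1: "C1_on UNIV (\<lambda>p. f (fst p) (snd p))"
    and fh_sol: "poisson_solution \<omega> \<phi> \<mu> (\<lambda>\<theta> z. f \<theta> (probe G0 z)) fh"
    and fh_C1: "C1_on (UNIV \<times> clock_Omega \<omega> \<phi>) (\<lambda>p. fh (fst p) (snd p))"
    and QSA: "\<And>t. t \<ge> 0 \<Longrightarrow>
      (\<Theta> has_vector_derivative \<alpha> *\<^sub>R f (\<Theta> t) (probe G0 (clock \<omega> \<phi> t))) (at t within {0..})"
begin

lemma continuous_on_f_probe_clock: "continuous_on S (\<lambda>s. f \<theta> (probe G0 (clock \<omega> \<phi> s)))"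
  using continuous_on_compose2[OF C1_on_imp_continuous_on[OF f_C1], of S "\<lambda>s. (\<theta>, probe G0 (clock \<omega> \<phi> s))"]
  by (simp add: continuous_on_Pair continuous_on_probe_clock[OF G0])

lemma continuous_on_fh_clock: "continuous_on {0..} (\<lambda>s. fh \<theta> (clock \<omega> \<phi> s))"
  using continuous_on_compose2[OF C1_on_imp_continuous_on[OF fh_C1], of "{0..}" "\<lambda>s. (\<theta>, clock \<omega> \<phi> s)"]
  by (simp add: continuous_on_Pair continuous_on_clock image_subset_iff clock_in_clock_Omega)

lemma continuous_on_Upsilon_clock: "continuous_on {0..} (\<lambda>s. Upsilon f G0 fh \<theta> (clock \<omega> \<phi> s))"
  unfolding Upsilon_def
  by (intro continuous_on_minus C1_on_continuous_on_dtheta[OF fh_C1] continuous_on_const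
      continuous_on_clock continuous_on_f_probe_clock) (auto intro: clock_in_clock_Omega)

lemma poisson_solution_derivative_along_QSA:
  fixes g gh :: "real^'d \<Rightarrow> complex^'k \<Rightarrow> real^'d"
  assumes "C1_on (UNIV \<times> clock_Omega \<omega> \<phi>) (\<lambda>p. gh (fst p) (snd p))"
    and "poisson_solution \<omega> \<phi> \<mu> g gh"
    and "\<And>\<theta>. continuous_on {0..} (\<lambda>s. g \<theta> (clock \<omega> \<phi> s))"
    and t: "t \<ge> 0"
  shows "((\<lambda>s. gh (\<Theta> s) (clock \<omega> \<phi> s)) has_vector_derivative
           \<alpha> *\<^sub>R Df f G0 gh (\<Theta> t) (clock \<omega> \<phi> t) - (g (\<Theta> t) (clock \<omega> \<phi> t) - avg \<mu> g (\<Theta> t)))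
           (at t within {0..})"
  using poisson_solution_total_derivative[OF assms(1-3) QSA[OF t] t]
  by (simp add: Df_def linear_cmul[OF C1_on_linear_dtheta[OF assms(1) clock_in_clock_Omega[OF t]]])

lemma fh_derivative_along_QSA:
  assumes "t \<ge> 0"
  shows "((\<lambda>s. fh (\<Theta> s) (clock \<omega> \<phi> s)) has_vector_derivative
           - \<alpha> *\<^sub>R Upsilon f G0 fh (\<Theta> t) (clock \<omega> \<phi> t)
           - (f (\<Theta> t) (probe G0 (clock \<omega> \<phi> t)) - avg \<mu> (\<lambda>\<theta> z. f \<theta> (probe G0 z)) (\<Theta> t)))
           (at t within {0..})"
  using poisson_solution_derivative_along_QSA[OF fh_C1 fh_sol continuous_on_f_probe_clock assms]
  by (simp add: Upsilon_def Df_def)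

lemma Y_has_vector_derivative:
  defines "fbar \<equiv> avg \<mu> (\<lambda>\<theta> z. f \<theta> (probe G0 z))"
    and "fht \<equiv> \<lambda>t. fh (\<Theta> t) (clock \<omega> \<phi> t)"
    and "Ups \<equiv> \<lambda>t. Upsilon f G0 fh (\<Theta> t) (clock \<omega> \<phi> t)"
  defines "Y \<equiv> \<lambda>t. \<Theta> t + \<alpha> *\<^sub>R fht t"
  defines "B \<equiv> \<lambda>t. integral {0..1} (\<lambda>r. Abar_mat fbar (Y t - (r * \<alpha>) *\<^sub>R fht t))"
  assumes fbar_C1: "C1_on UNIV fbar"
    and t: "t \<ge> 0"
  shows "(Y has_vector_derivative \<alpha> *\<^sub>R (fbar (Y t) - \<alpha> *\<^sub>R (B t *v fht t + Ups t))) (at t within {0..})"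
proof -
  have fbar_\<Theta>: "fbar (\<Theta> t) = fbar (Y t) - \<alpha> *\<^sub>R (B t *v fht t)"
    using integral_mean_value_Abar_mat[OF fbar_C1, of "Y t" "\<alpha> *\<^sub>R fht t"]
    by (simp add: Y_def B_def matrix_vector_mult_scaleR)
  have "(Y has_vector_derivative \<alpha> *\<^sub>R f (\<Theta> t) (probe G0 (clock \<omega> \<phi> t))
      + \<alpha> *\<^sub>R (- \<alpha> *\<^sub>R Ups t - (f (\<Theta> t) (probe G0 (clock \<omega> \<phi> t)) - fbar (\<Theta> t)))) (at t within {0..})"
    unfolding Y_def fht_def Ups_def fbar_def
    by (intro has_vector_derivative_add QSA[OF t] fh_derivative_along_QSA[OF t]
        bounded_linear.has_vector_derivative[OF bounded_linear_scaleR_right])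
  then show ?thesis
    by (rule has_vector_derivative_eq_rhs) (simp add: fbar_\<Theta> algebra_simps)
qed

lemma \<Theta>_has_vector_derivative_expansion:
  fixes fhh Uph :: "real^'d \<Rightarrow> complex^'k \<Rightarrow> real^'d" and W1' W2' W2'' :: "real \<Rightarrow> real^'d"
  defines "fbar \<equiv> avg \<mu> (\<lambda>\<theta> z. f \<theta> (probe G0 z))"
    and "Upsbar \<equiv> avg \<mu> (Upsilon f G0 fh)"
    and "W0 \<equiv> \<lambda>t. - Df f G0 Uph (\<Theta> t) (clock \<omega> \<phi> t)"
    and "W1 \<equiv> \<lambda>t. - Df f G0 fhh (\<Theta> t) (clock \<omega> \<phi> t) + Uph (\<Theta> t) (clock \<omega> \<phi> t)"
    and "W2 \<equiv> \<lambda>t. fhh (\<Theta> t) (clock \<omega> \<phi> t)"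
  assumes fhh_sol: "poisson_solution \<omega> \<phi> \<mu> fh fhh"
    and Uph_sol: "poisson_solution \<omega> \<phi> \<mu> (Upsilon f G0 fh) Uph"
    and fhh_C1: "C1_on (UNIV \<times> clock_Omega \<omega> \<phi>) (\<lambda>p. fhh (fst p) (snd p))"
    and Uph_C1: "C1_on (UNIV \<times> clock_Omega \<omega> \<phi>) (\<lambda>p. Uph (fst p) (snd p))"
    and W1': "\<And>s. s \<ge> 0 \<Longrightarrow> (W1 has_vector_derivative W1' s) (at s within {0..})"
    and W2': "\<And>s. s \<ge> 0 \<Longrightarrow> (W2 has_vector_derivative W2' s) (at s within {0..})"
    and W2'': "\<And>s. s \<ge> 0 \<Longrightarrow> (W2' has_vector_derivative W2'' s) (at s within {0..})"
    and t: "t \<ge> 0"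
  shows "(\<Theta> has_vector_derivative
           \<alpha> *\<^sub>R (fbar (\<Theta> t) - \<alpha> *\<^sub>R Upsbar (\<Theta> t) + (\<alpha>\<^sup>2 *\<^sub>R W0 t + \<alpha> *\<^sub>R W1' t + W2'' t)))
           (at t within {0..})"
proof -
  let ?\<Phi> = "clock \<omega> \<phi>"
  let ?U = "\<lambda>s. Uph (\<Theta> s) (?\<Phi> s)" and ?F = "\<lambda>s. fh (\<Theta> s) (?\<Phi> s)"
  have W2'_eq: "W2' s = \<alpha> *\<^sub>R Df f G0 fhh (\<Theta> s) (?\<Phi> s) - ?F s" if s: "s \<ge> 0" for s
  proof -
    have "avg \<mu> fh (\<Theta> s) = 0"
      using fh_sol unfolding poisson_solution_def avg_def by blast
    with poisson_solution_derivative_along_QSA[OF fhh_C1 fhh_sol continuous_on_fh_clock s]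
    have "(W2 has_vector_derivative \<alpha> *\<^sub>R Df f G0 fhh (\<Theta> s) (?\<Phi> s) - ?F s) (at s within {0..})"
      unfolding W2_def by simp
    with W2'[OF s] show ?thesis
      by (rule vector_derivative_unique_within[OF at_within_atLeast_neq_bot[OF s]])
  qed
  have "((\<lambda>s. \<alpha> *\<^sub>R ?U s - ?F s) has_vector_derivative
      \<alpha>\<^sup>2 *\<^sub>R Df f G0 Uph (\<Theta> t) (?\<Phi> t) + \<alpha> *\<^sub>R Upsbar (\<Theta> t)
      + f (\<Theta> t) (probe G0 (?\<Phi> t)) - fbar (\<Theta> t)) (at t within {0..})"
    (is "(_ has_vector_derivative ?D) _")
    unfolding Upsbar_def fbar_def
    by (rule has_vector_derivative_eq_rhs[OF has_vector_derivative_diff[OF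
          bounded_linear.has_vector_derivative[OF bounded_linear_scaleR_right
            poisson_solution_derivative_along_QSA[OF Uph_C1 Uph_sol continuous_on_Upsilon_clock t]]
          fh_derivative_along_QSA[OF t]]])
      (simp add: algebra_simps power2_eq_square)
  \<comment> \<open>the D^f fhh terms of W2' and alpha W1 cancel\<close>
  then have "((\<lambda>s. W2' s + \<alpha> *\<^sub>R W1 s) has_vector_derivative ?D) (at t within {0..})"
    by (rule has_vector_derivative_transform[rotated 2])
      (use t W2'_eq in \<open>auto simp: W1_def algebra_simps\<close>)
  moreover have "((\<lambda>s. W2' s + \<alpha> *\<^sub>R W1 s) has_vector_derivative W2'' t + \<alpha> *\<^sub>R W1' t)
      (at t within {0..})"
    by (intro has_vector_derivative_add W2''[OF t]
        bounded_linear.has_vector_derivative[OF bounded_linear_scaleR_right] W1'[OF t])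
  ultimately have "W2'' t + \<alpha> *\<^sub>R W1' t = ?D"
    by (rule vector_derivative_unique_within[OF at_within_atLeast_neq_bot[OF t], rotated])
  then have "W2'' t = ?D - \<alpha> *\<^sub>R W1' t"
    by (simp add: eq_diff_eq)
  with QSA[OF t] show ?thesis
    by (simp add: W0_def algebra_simps)
qed

end

theorem theorem2p3:
  fixes \<omega> \<phi> :: "real^'k"
    and G0 :: "real^'k \<Rightarrow> real^'m"
    and f :: "real^'d \<Rightarrow> real^'m \<Rightarrow> real^'d"
    and \<mu> :: "(complex^'k) measure"
    and \<alpha> :: real
    and fh fhh Uph :: "real^'d \<Rightarrow> complex^'k \<Rightarrow> real^'d"
    and \<Theta> :: "real \<Rightarrow> real^'d"
  assumes \<omega>_pos: "\<forall>i. \<omega>$i > 0"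
    and haar: "is_haar_on_Omega \<omega> \<phi> \<mu>"
    and G0: "abs_summable_taylor G0"
    and f_C1: "C1_on UNIV (\<lambda>p. f (fst p) (snd p))"
    and fbar_C1: "C1_on UNIV (avg \<mu> (\<lambda>\<theta> z. f \<theta> (probe G0 z)))"
    and \<alpha>_pos: "\<alpha> > 0"
    and fh_sol: "poisson_solution \<omega> \<phi> \<mu> (\<lambda>\<theta> z. f \<theta> (probe G0 z)) fh"
    and fhh_sol: "poisson_solution \<omega> \<phi> \<mu> fh fhh"
    and Uph_sol: "poisson_solution \<omega> \<phi> \<mu> (Upsilon f G0 fh) Uph"
    and fh_C1: "C1_on (UNIV \<times> clock_Omega \<omega> \<phi>) (\<lambda>p. fh (fst p) (snd p))"
    and fhh_C1: "C1_on (UNIV \<times> clock_Omega \<omega> \<phi>) (\<lambda>p. fhh (fst p) (snd p))"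
    and Uph_C1: "C1_on (UNIV \<times> clock_Omega \<omega> \<phi>) (\<lambda>p. Uph (fst p) (snd p))"
    and QSA: "\<forall>t\<ge>0. (\<Theta> has_vector_derivative
                 \<alpha> *\<^sub>R f (\<Theta> t) (probe G0 (clock \<omega> \<phi> t))) (at t within {0..})"
  shows
   "(let fbar = avg \<mu> (\<lambda>\<theta> z. f \<theta> (probe G0 z));
         fht = (\<lambda>t. fh (\<Theta> t) (clock \<omega> \<phi> t));
         Ups = (\<lambda>t. Upsilon f G0 fh (\<Theta> t) (clock \<omega> \<phi> t));
         Y = (\<lambda>t. \<Theta> t + \<alpha> *\<^sub>R fht t);
         B = (\<lambda>t. integral {0..1} (\<lambda>r. Abar_mat fbar (Y t - (r * \<alpha>) *\<^sub>R fht t)))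
     in \<forall>t\<ge>0. (Y has_vector_derivative
                 \<alpha> *\<^sub>R (fbar (Y t) - \<alpha> *\<^sub>R (B t *v fht t + Ups t))) (at t within {0..}))
    \<and>
    (let fbar = avg \<mu> (\<lambda>\<theta> z. f \<theta> (probe G0 z));
         Upsbar = avg \<mu> (Upsilon f G0 fh);
         W0 = (\<lambda>t. - Df f G0 Uph (\<Theta> t) (clock \<omega> \<phi> t));
         W1 = (\<lambda>t. - Df f G0 fhh (\<Theta> t) (clock \<omega> \<phi> t) + Uph (\<Theta> t) (clock \<omega> \<phi> t));
         W2 = (\<lambda>t. fhh (\<Theta> t) (clock \<omega> \<phi> t))
     in \<forall>W1' W2' W2''.
          (\<forall>t\<ge>0. (W1 has_vector_derivative W1' t) (at t within {0..}) \<and>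
                  (W2 has_vector_derivative W2' t) (at t within {0..}) \<and>
                  (W2' has_vector_derivative W2'' t) (at t within {0..})) \<longrightarrow>
          (\<forall>t\<ge>0. (\<Theta> has_vector_derivative
              \<alpha> *\<^sub>R (fbar (\<Theta> t) - \<alpha> *\<^sub>R Upsbar (\<Theta> t)
                      + (\<alpha>\<^sup>2 *\<^sub>R W0 t + \<alpha> *\<^sub>R W1' t + W2'' t))) (at t within {0..})))"
proof -
  interpret qsa_poisson \<omega> \<phi> G0 f \<mu> \<alpha> fh \<Theta>
    using G0 f_C1 fh_sol fh_C1 QSA by unfold_locales auto
  show ?thesis
    unfolding Let_def
    using Y_has_vector_derivative[OF fbar_C1]
      \<Theta>_has_vector_derivative_expansion[OF fhh_sol Uph_sol fhh_C1 Uph_C1]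
    by blast
qed

end
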